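(* Let $K$ be any field, $n\ge 3$, $V$ an $n$-dimensional $K$-vector space, and let $S=\{t_\alpha=1+v_\alpha\otimes\phi_\alpha:\alpha\in I\}\subseteq SL(V)$ be a set of transvections. Then $S$ generates an irreducible subgroup of $SL(V)$ if and only if $S$ satisfies both of the following: (P1) $\langle v_\alpha:\alpha\in I\rangle=V$ and $\langle\phi_\alpha:\alpha\in I\rangle=V^*$; (P2) the transvection graph $\Gamma(S)$ is strongly connected.
   Context: A transvection is $1+d\otimes\phi\in SL(V)$ acting by $x\mapsto x+\phi(x)d$, $0\ne d\in V$, $0\neq\phi\in V^*$, $\phi(d)=0$. For a set $S$ of transvections, $\Gamma(S)$ is the directed graph with vertex set $S\setminus\{1\}$ and a directed edge from $1+d_1\otimes\phi_1$ to $1+d_2\otimes\phi_2$ iff $\phi_2(d_1)\neq 0$. *)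

theory Defs
  imports "HOL-Analysis.Analysis"
begin

text \<open>V = K^n is modelled as 'a ^ 'n (with 'a a field, n = CARD('n)).
  The dual space V* is identified with 'a ^ 'n via the standard dual basis:
  a coordinate vector f denotes the functional x |-> sum_i f$i * x$i.\<close>

definition dual_app :: "'a::field ^ 'n \<Rightarrow> 'a ^ 'n \<Rightarrow> 'a" where
  "dual_app f x = (\<Sum>i\<in>UNIV. f $ i * x $ i)"

definition transv :: "'a::field ^ 'n \<Rightarrow> 'a ^ 'n \<Rightarrow> ('a ^ 'n \<Rightarrow> 'a ^ 'n)" where
  "transv d f = (\<lambda>x. x + dual_app f x *s d)"

definition is_transv_rep :: "'a::field ^ 'n \<Rightarrow> 'a ^ 'n \<Rightarrow> bool" where
  "is_transv_rep d f \<longleftrightarrow> d \<noteq> 0 \<and> f \<noteq> 0 \<and> dual_app f d = 0"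

definition tgraph_edges :: "('a::field ^ 'n \<Rightarrow> 'a ^ 'n) set \<Rightarrow> (('a ^ 'n \<Rightarrow> 'a ^ 'n) \<times> ('a ^ 'n \<Rightarrow> 'a ^ 'n)) set" where
  "tgraph_edges S = {(t1, t2). t1 \<in> S - {id} \<and> t2 \<in> S - {id} \<and>
     (\<exists>d1 f1 d2 f2. is_transv_rep d1 f1 \<and> is_transv_rep d2 f2 \<and>
        t1 = transv d1 f1 \<and> t2 = transv d2 f2 \<and> dual_app f2 d1 \<noteq> 0)}"

definition tgraph_strongly_connected :: "('a::field ^ 'n \<Rightarrow> 'a ^ 'n) set \<Rightarrow> bool" where
  "tgraph_strongly_connected S \<longleftrightarrow>
     (\<forall>u \<in> S - {id}. \<forall>w \<in> S - {id}. (u, w) \<in> (tgraph_edges S)\<^sup>*)"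

inductive_set gen_group :: "('b \<Rightarrow> 'b) set \<Rightarrow> ('b \<Rightarrow> 'b) set" for S where
  gen_id: "id \<in> gen_group S"
| gen_mult: "s \<in> S \<Longrightarrow> g \<in> gen_group S \<Longrightarrow> s \<circ> g \<in> gen_group S"
| gen_inv: "s \<in> S \<Longrightarrow> g \<in> gen_group S \<Longrightarrow> inv s \<circ> g \<in> gen_group S"

definition irreducible_group :: "('a::field ^ 'n \<Rightarrow> 'a ^ 'n) set \<Rightarrow> bool" where
  "irreducible_group G \<longleftrightarrow>
     (\<forall>W. vec.subspace W \<and> (\<forall>g\<in>G. g ` W \<subseteq> W) \<longrightarrow> W = {0} \<or> W = UNIV)"

end

theory Submission
  imports Defs
begin

(* For a transvection t = 1 + d \<otimes> \<phi> we have t x - x = \<phi>(x) d, and t^-1 = 1 - d \<otimes> \<phi>.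
   Hence a subspace W is invariant under the group generated by the t_\<alpha> iff it is
   closed in the sense that \<phi>_\<alpha>(W) \<noteq> 0 forces v_\<alpha> \<in> W.  The span of the v_\<alpha>, the
   common kernel of the \<phi>_\<alpha>, and the span of the v_\<alpha> over the vertices reachable from
   one vertex of \<Gamma>(S) are closed; irreducibility applied to them gives (P1) and (P2).
   Conversely, a nonzero closed W is moved by some t_\<alpha> (by P1), so contains v_\<alpha>, and
   then contains v_\<beta> for every \<beta> reachable from \<alpha> (P2), hence the span of all v_\<beta>,
   which is V (P1).  The hypothesis n \<ge> 3 is only used as n \<ge> 2, to exclude I = {}. *)

lemma dual_app_add_right: "dual_app f (x + y) = dual_app f x + dual_app f y"
  by (simp add: dual_app_def sum.distrib algebra_simps)

lemma dual_app_scale_right: "dual_app f (c *s x) = c * dual_app f x"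
  by (simp add: dual_app_def sum_distrib_left algebra_simps)

lemma dual_app_zero_right [simp]: "dual_app f 0 = 0"
  by (simp add: dual_app_def)

lemma dual_app_diff_right: "dual_app f (x - y) = dual_app f x - dual_app f y"
  by (simp add: dual_app_def sum_subtractf algebra_simps)

lemma dual_app_commute: "dual_app f x = dual_app x f"
  by (simp add: dual_app_def mult.commute)

lemma dual_app_axis: "dual_app f (axis i 1) = f $ i"
  by (simp add: dual_app_def axis_def if_distrib cong: if_cong)

lemma dual_app_nonzero:
  assumes "f \<noteq> 0"
  obtains y where "dual_app f y \<noteq> 0"
proof -
  from assms obtain i where "f $ i \<noteq> 0" by (metis vec_eq_iff zero_index)
  then show ?thesis using that dual_app_axis by metis
qed

lemma dual_app_vanishes_on_span:
  assumes "\<forall>g\<in>G. dual_app f g = 0" "x \<in> vec.span G"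
  shows "dual_app f x = 0"
proof -
  have "vec.subspace {x. dual_app f x = 0}"
    by (auto simp: vec.subspace_def dual_app_add_right dual_app_scale_right)
  then have "vec.span G \<subseteq> {x. dual_app f x = 0}"
    using assms(1) by (intro vec.span_minimal) auto
  then show ?thesis using assms(2) by auto
qed

lemma span_eq_UNIV_if_annihilator_trivial:
  fixes P :: "('a::field^'n) set"
  assumes "\<And>x. \<forall>p\<in>P. dual_app p x = 0 \<Longrightarrow> x = 0"
  shows "vec.span P = UNIV"
proof -
  obtain B where B: "B \<subseteq> vec.span P" "vec.independent B" "vec.span P \<subseteq> vec.span B"
    "card B = vec.dim (vec.span P)"
    using vec.basis_exists by blast
  have "card B \<le> CARD('n)"
    using B(4) dim_subset_UNIV_cart_gen by metis
  then obtain h :: "'a^'n \<Rightarrow> 'n" where h: "inj_on h B"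
    using card_le_inj[of B "UNIV :: 'n set"] vec.finiteI_independent[OF B(2)] by auto
  define A :: "'a^'n^'n" where "A = (\<chi> j. if j \<in> h ` B then inv_into B h j else 0)"
  have rows_in_span: "rows A \<subseteq> vec.span P"
    using B(1) h by (auto simp: rows_def row_def A_def inv_into_into vec.span_zero)
  have basis_in_rows: "B \<subseteq> rows A"
  proof
    fix b assume "b \<in> B"
    then have "row (h b) A = b" using h by (simp add: row_def A_def)
    then show "b \<in> rows A" unfolding rows_def by (metis (mono_tags) UNIV_I mem_Collect_eq)
  qed
  have kernel_trivial: "\<forall>x. A *v x = 0 \<longrightarrow> x = 0"
  proof (intro allI impI)
    fix x assume "A *v x = 0"
    have "dual_app x (row j A) = 0" for j
      using \<open>A *v x = 0\<close>
      by (simp add: vec_eq_iff matrix_vector_mult_def row_def dual_app_def mult.commute)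
    then have "\<forall>b\<in>B. dual_app x b = 0"
      using basis_in_rows by (auto simp: rows_def)
    then have "dual_app x p = 0" if "p \<in> P" for p
      using that B(3) dual_app_vanishes_on_span vec.span_base by blast
    then show "x = 0"
      using assms by (simp add: dual_app_commute)
  qed
  have "vec.span (rows A) = UNIV"
    using kernel_trivial matrix_left_invertible_ker[of A] matrix_left_invertible_span_rows_gen[of A]
    by blast
  moreover have "vec.span (rows A) \<subseteq> vec.span P"
    using rows_in_span by (rule vec.span_minimal[OF _ vec.subspace_span])
  ultimately show ?thesis by blast
qed

lemma exists_proper_nonzero_subspace:
  assumes "CARD('n) \<ge> 2"
  obtains W :: "('a::field^'n) set" where "vec.subspace W" "W \<noteq> {0}" "W \<noteq> UNIV"
proof
  let ?e = "axis undefined (1::'a) :: 'a^'n"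
  show "vec.subspace (vec.span {?e})" by (rule vec.subspace_span)
  have "?e \<in> vec.span {?e}" by (rule vec.span_base) simp
  moreover have "?e \<noteq> 0" by simp
  ultimately show "vec.span {?e} \<noteq> {0}" by blast
  show "vec.span {?e} \<noteq> UNIV"
  proof
    assume "vec.span {?e} = UNIV"
    then have "vec.dim (vec.span {?e}) = CARD('n)"
      by (simp only: vec_dim_card)
    moreover have "vec.dim (vec.span {?e}) = 1"
      by (simp add: vec.dim_span)
    ultimately show False using assms by simp
  qed
qed

lemma transv_minus_id [simp]: "transv d f x - x = dual_app f x *s d"
  by (simp add: transv_def)

lemma inv_transv:
  assumes "dual_app f d = 0"
  shows "inv (transv d f) = transv (- d) f"
proof (rule inv_unique_comp)
  have "dual_app f (transv d f x) = dual_app f x" "dual_app f (transv (- d) f x) = dual_app f x" for x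
    using assms by (simp_all add: transv_def dual_app_add_right dual_app_diff_right dual_app_scale_right)
  then show "transv d f \<circ> transv (- d) f = id" "transv (- d) f \<circ> transv d f = id"
    by (auto simp: transv_def fun_eq_iff)
qed

lemma transv_ne_id:
  assumes "is_transv_rep d f"
  shows "transv d f \<noteq> id"
proof
  assume "transv d f = id"
  moreover obtain y where "dual_app f y \<noteq> 0"
    using assms dual_app_nonzero unfolding is_transv_rep_def by blast
  ultimately show False
    using assms transv_minus_id[of d f y] by (simp add: is_transv_rep_def)
qed

lemma subspace_scale_cancel:
  assumes "vec.subspace W" "c \<noteq> 0" "c *s x \<in> W"
  shows "x \<in> W"
  using vec.subspace_scale[OF assms(1,3), of "inverse c"] assms(2)
  by (simp add: vector_smult_assoc)

lemma transv_image_subset_iff: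
  assumes "vec.subspace W"
  shows "transv d f ` W \<subseteq> W \<longleftrightarrow> (\<forall>x\<in>W. dual_app f x \<noteq> 0 \<longrightarrow> d \<in> W)"
proof
  assume "transv d f ` W \<subseteq> W"
  then have "dual_app f x *s d \<in> W" if "x \<in> W" for x
    using that transv_minus_id[of d f x] vec.subspace_diff[OF assms] by (metis image_subset_iff)
  then show "\<forall>x\<in>W. dual_app f x \<noteq> 0 \<longrightarrow> d \<in> W"
    using subspace_scale_cancel[OF assms] by blast
next
  assume "\<forall>x\<in>W. dual_app f x \<noteq> 0 \<longrightarrow> d \<in> W"
  then have "dual_app f x *s d \<in> W" if "x \<in> W" for x
    using that vec.subspace_scale[OF assms] vec.subspace_0[OF assms]
    by (cases "dual_app f x = 0") auto
  then show "transv d f ` W \<subseteq> W"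
    using vec.subspace_add[OF assms] by (auto simp: transv_def)
qed

lemma transv_displacements_in_subspace_iff:
  assumes "vec.subspace W" "f \<noteq> 0"
  shows "(\<forall>y. transv d f y - y \<in> W) \<longleftrightarrow> d \<in> W"
proof
  obtain y where "dual_app f y \<noteq> 0" using assms(2) dual_app_nonzero by blast
  then show "\<forall>y. transv d f y - y \<in> W \<Longrightarrow> d \<in> W"
    using subspace_scale_cancel[OF assms(1)] by (metis transv_minus_id)
qed (simp add: vec.subspace_scale[OF assms(1)])

lemma gen_group_generator:
  assumes "s \<in> S"
  shows "s \<in> gen_group S"
  using gen_mult[OF assms gen_id] by simp

lemma gen_group_image_subset:
  assumes "\<And>s. s \<in> S \<Longrightarrow> s ` W \<subseteq> W" "\<And>s. s \<in> S \<Longrightarrow> inv s ` W \<subseteq> W"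
    and "g \<in> gen_group S"
  shows "g ` W \<subseteq> W"
proof -
  have comp: "(h \<circ> g) ` W \<subseteq> W" if "h ` W \<subseteq> W" "g ` W \<subseteq> W" for h g :: "'a \<Rightarrow> 'a"
    using that by (auto simp: image_subset_iff)
  from assms(3) show ?thesis
  proof induction
    case (gen_mult s g)
    from assms(1)[OF gen_mult.hyps(1)] gen_mult.IH show ?case by (rule comp)
  next
    case (gen_inv s g)
    from assms(2)[OF gen_inv.hyps(1)] gen_inv.IH show ?case by (rule comp)
  qed simp
qed

abbreviation transvs :: "'i set \<Rightarrow> ('i \<Rightarrow> 'a::field^'n) \<Rightarrow> ('i \<Rightarrow> 'a^'n) \<Rightarrow> ('a^'n \<Rightarrow> 'a^'n) set"
  where "transvs I v phi \<equiv> (\<lambda>\<alpha>. transv (v \<alpha>) (phi \<alpha>)) ` I"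

definition transv_closed :: "'i set \<Rightarrow> ('i \<Rightarrow> 'a::field^'n) \<Rightarrow> ('i \<Rightarrow> 'a^'n) \<Rightarrow> ('a^'n) set \<Rightarrow> bool"
  where "transv_closed I v phi W \<longleftrightarrow>
    vec.subspace W \<and> (\<forall>\<alpha>\<in>I. \<forall>x\<in>W. dual_app (phi \<alpha>) x \<noteq> 0 \<longrightarrow> v \<alpha> \<in> W)"

lemma transv_closedD:
  "transv_closed I v phi W \<Longrightarrow> \<alpha> \<in> I \<Longrightarrow> x \<in> W \<Longrightarrow> dual_app (phi \<alpha>) x \<noteq> 0 \<Longrightarrow> v \<alpha> \<in> W"
  unfolding transv_closed_def by blast

lemma transv_closed_iff_image_subset:
  "transv_closed I v phi W \<longleftrightarrow>
    vec.subspace W \<and> (\<forall>\<alpha>\<in>I. transv (v \<alpha>) (phi \<alpha>) ` W \<subseteq> W)"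
proof (cases "vec.subspace W")
  case True
  then show ?thesis by (simp add: transv_closed_def transv_image_subset_iff[OF True])
qed (simp add: transv_closed_def)

lemma gen_group_transvs_invariant_iff:
  assumes "\<forall>\<alpha>\<in>I. dual_app (phi \<alpha>) (v \<alpha>) = 0" "vec.subspace W"
  shows "(\<forall>g\<in>gen_group (transvs I v phi). g ` W \<subseteq> W) \<longleftrightarrow> transv_closed I v phi W"
proof
  assume invariant: "\<forall>g\<in>gen_group (transvs I v phi). g ` W \<subseteq> W"
  have "transv (v \<alpha>) (phi \<alpha>) ` W \<subseteq> W" if "\<alpha> \<in> I" for \<alpha>
  proof -
    have "transv (v \<alpha>) (phi \<alpha>) \<in> gen_group (transvs I v phi)"
      using that by (intro gen_group_generator imageI)
    then show ?thesis using invariant by blast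
  qed
  then show "transv_closed I v phi W"
    using assms(2) by (simp add: transv_closed_iff_image_subset)
next
  assume closed: "transv_closed I v phi W"
  have image: "t ` W \<subseteq> W" if "t \<in> transvs I v phi" for t
    using closed that by (auto simp: transv_closed_iff_image_subset)
  have inv_image: "inv t ` W \<subseteq> W" if "t \<in> transvs I v phi" for t
  proof -
    from that obtain \<alpha> where "\<alpha> \<in> I" and t: "t = transv (v \<alpha>) (phi \<alpha>)" by blast
    then have "inv t = transv (- v \<alpha>) (phi \<alpha>)"
      using assms(1) by (simp add: inv_transv)
    moreover have "transv (- v \<alpha>) (phi \<alpha>) ` W \<subseteq> W"
      using closed \<open>\<alpha> \<in> I\<close> vec.subspace_neg[OF assms(2)]
      by (auto simp: transv_closed_def transv_image_subset_iff[OF assms(2)])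
    ultimately show ?thesis by simp
  qed
  show "\<forall>g\<in>gen_group (transvs I v phi). g ` W \<subseteq> W"
    using gen_group_image_subset[OF image inv_image] by blast
qed

lemma irreducible_gen_group_transvs_iff:
  assumes "\<forall>\<alpha>\<in>I. dual_app (phi \<alpha>) (v \<alpha>) = 0"
  shows "irreducible_group (gen_group (transvs I v phi)) \<longleftrightarrow>
    (\<forall>W. transv_closed I v phi W \<longrightarrow> W = {0} \<or> W = UNIV)"
proof -
  have "vec.subspace W \<and> (\<forall>g\<in>gen_group (transvs I v phi). g ` W \<subseteq> W) \<longleftrightarrow>
      transv_closed I v phi W" for W
  proof (cases "vec.subspace W")
    case True
    then show ?thesis using gen_group_transvs_invariant_iff[OF assms True] by simp
  qed (simp add: transv_closed_def)
  then show ?thesis unfolding irreducible_group_def by simp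
qed

lemma index_set_nonempty_if_closed_trivial:
  fixes v :: "'i \<Rightarrow> 'a::field^'n"
  assumes "CARD('n) \<ge> 2"
    and closed_trivial: "\<And>W. transv_closed I v phi W \<Longrightarrow> W = {0} \<or> W = UNIV"
  shows "I \<noteq> {}"
proof
  assume "I = {}"
  then have "transv_closed I v phi W" if "vec.subspace W" for W
    using that by (simp add: transv_closed_def)
  then show False
    using exists_proper_nonzero_subspace[OF assms(1)] closed_trivial by metis
qed

lemma span_eq_UNIV_if_closed_trivial:
  assumes "\<alpha> \<in> I" "v \<alpha> \<noteq> 0"
    and closed_trivial: "\<And>W. transv_closed I v phi W \<Longrightarrow> W = {0} \<or> W = UNIV"
  shows "vec.span (v ` I) = UNIV"
proof -
  have "transv_closed I v phi (vec.span (v ` I))"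
    by (simp add: transv_closed_def vec.subspace_span vec.span_base)
  moreover have "v \<alpha> \<in> vec.span (v ` I)"
    using assms(1) by (simp add: vec.span_base)
  ultimately show ?thesis using closed_trivial assms(2) by blast
qed

lemma dual_span_eq_UNIV_if_closed_trivial:
  assumes "\<alpha> \<in> I" "phi \<alpha> \<noteq> 0"
    and closed_trivial: "\<And>W. transv_closed I v phi W \<Longrightarrow> W = {0} \<or> W = UNIV"
  shows "vec.span (phi ` I) = UNIV"
proof (rule span_eq_UNIV_if_annihilator_trivial)
  define U where "U = {x. \<forall>\<beta>\<in>I. dual_app (phi \<beta>) x = 0}"
  have "vec.subspace U"
    by (auto simp: U_def vec.subspace_def dual_app_add_right dual_app_scale_right)
  then have "transv_closed I v phi U"
    by (auto simp: transv_closed_def U_def)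
  moreover have "U \<noteq> UNIV"
  proof -
    obtain y where "dual_app (phi \<alpha>) y \<noteq> 0" using dual_app_nonzero[OF assms(2)] .
    then have "y \<notin> U" using assms(1) by (auto simp: U_def)
    then show ?thesis by blast
  qed
  ultimately have "U = {0}" using closed_trivial by blast
  then show "x = 0" if "\<forall>p\<in>phi ` I. dual_app p x = 0" for x
    using that by (auto simp: U_def)
qed

lemma transv_in_transvs_minus_id:
  assumes "\<forall>\<alpha>\<in>I. is_transv_rep (v \<alpha>) (phi \<alpha>)" "\<alpha> \<in> I"
  shows "transv (v \<alpha>) (phi \<alpha>) \<in> transvs I v phi - {id}"
  using assms by (simp add: transv_ne_id)

lemma tgraph_edge_transvs:
  assumes rep: "\<forall>\<alpha>\<in>I. is_transv_rep (v \<alpha>) (phi \<alpha>)" and "\<alpha> \<in> I" "\<beta> \<in> I"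
    and "dual_app (phi \<beta>) (v \<alpha>) \<noteq> 0"
  shows "(transv (v \<alpha>) (phi \<alpha>), transv (v \<beta>) (phi \<beta>)) \<in> tgraph_edges (transvs I v phi)"
  using assms transv_in_transvs_minus_id[OF rep \<open>\<alpha> \<in> I\<close>] transv_in_transvs_minus_id[OF rep \<open>\<beta> \<in> I\<close>]
  unfolding tgraph_edges_def by blast

lemma tgraph_strongly_connected_if_closed_trivial:
  assumes rep: "\<forall>\<alpha>\<in>I. is_transv_rep (v \<alpha>) (phi \<alpha>)"
    and closed_trivial: "\<And>W. transv_closed I v phi W \<Longrightarrow> W = {0} \<or> W = UNIV"
  shows "tgraph_strongly_connected (transvs I v phi)"
  unfolding tgraph_strongly_connected_def
proof (intro ballI)
  fix u w assume u: "u \<in> transvs I v phi - {id}" and w: "w \<in> transvs I v phi - {id}"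
  define reachable where
    "reachable \<beta> \<longleftrightarrow> (u, transv (v \<beta>) (phi \<beta>)) \<in> (tgraph_edges (transvs I v phi))\<^sup>*" for \<beta>
  have reachable_step: "reachable \<beta>"
    if "\<alpha> \<in> I" "\<beta> \<in> I" "reachable \<alpha>" "dual_app (phi \<beta>) (v \<alpha>) \<noteq> 0" for \<alpha> \<beta>
  proof -
    have "(transv (v \<alpha>) (phi \<alpha>), transv (v \<beta>) (phi \<beta>)) \<in> tgraph_edges (transvs I v phi)"
      using rep that(1,2,4) by (rule tgraph_edge_transvs)
    with that(3) show ?thesis unfolding reachable_def by (rule rtrancl_into_rtrancl)
  qed
  define R where "R = v ` {\<alpha>\<in>I. reachable \<alpha>}"
  have "transv_closed I v phi (vec.span R)"
    unfolding transv_closed_def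
  proof (intro conjI ballI impI)
    show "vec.subspace (vec.span R)" by (rule vec.subspace_span)
  next
    fix \<beta> x assume \<beta>: "\<beta> \<in> I" and "x \<in> vec.span R" "dual_app (phi \<beta>) x \<noteq> 0"
    then have "\<exists>r\<in>R. dual_app (phi \<beta>) r \<noteq> 0"
      using dual_app_vanishes_on_span by blast
    then obtain \<alpha> where \<alpha>: "\<alpha> \<in> I" "reachable \<alpha>" "dual_app (phi \<beta>) (v \<alpha>) \<noteq> 0"
      unfolding R_def by blast
    from \<alpha>(1) \<beta> \<alpha>(2,3) have "reachable \<beta>" by (rule reachable_step)
    with \<beta> have "v \<beta> \<in> R" unfolding R_def by blast
    then show "v \<beta> \<in> vec.span R" by (rule vec.span_base)
  qed
  moreover have "vec.span R \<noteq> {0}"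
  proof -
    obtain \<alpha> where \<alpha>: "\<alpha> \<in> I" "u = transv (v \<alpha>) (phi \<alpha>)" using u by blast
    then have "reachable \<alpha>" by (simp add: reachable_def)
    with \<alpha>(1) have "v \<alpha> \<in> vec.span R" unfolding R_def by (intro vec.span_base) blast
    moreover have "v \<alpha> \<noteq> 0" using rep \<alpha>(1) by (simp add: is_transv_rep_def)
    ultimately show ?thesis by blast
  qed
  ultimately have span_R: "vec.span R = UNIV" using closed_trivial by blast
  obtain \<gamma> where \<gamma>: "\<gamma> \<in> I" "w = transv (v \<gamma>) (phi \<gamma>)" using w by blast
  have "reachable \<gamma>"
  proof (rule ccontr)
    assume unreachable: "\<not> reachable \<gamma>"
    have "\<forall>r\<in>R. dual_app (phi \<gamma>) r = 0"
      unfolding R_def using reachable_step[OF _ \<gamma>(1)] unreachable by blast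
    then have "dual_app (phi \<gamma>) x = 0" for x
      using dual_app_vanishes_on_span span_R by blast
    moreover obtain y where "dual_app (phi \<gamma>) y \<noteq> 0"
      using dual_app_nonzero rep \<gamma>(1) unfolding is_transv_rep_def by blast
    ultimately show False by simp
  qed
  then show "(u, w) \<in> (tgraph_edges (transvs I v phi))\<^sup>*"
    using \<gamma>(2) by (simp add: reachable_def)
qed

(* Edges of \<Gamma>(S) are witnessed by arbitrary representatives of the transvections, so d \<in> W
   is propagated in its representative-free form: all displacements t y - y lie in W. *)
lemma tgraph_reachable_displacements_in_subspace:
  assumes "vec.subspace W" "\<forall>s\<in>S. s ` W \<subseteq> W"
    and "(s, s') \<in> (tgraph_edges S)\<^sup>*" "\<forall>y. s y - y \<in> W"
  shows "\<forall>y. s' y - y \<in> W"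
  using assms(3)
proof (induction rule: rtrancl_induct)
  case base
  from assms(4) show ?case .
next
  case (step t t')
  from step.hyps(2) obtain d f d' f' where rep: "is_transv_rep d f" "is_transv_rep d' f'"
    and t: "t = transv d f" and t': "t' = transv d' f'" "t' \<in> S"
    and edge: "dual_app f' d \<noteq> 0"
    unfolding tgraph_edges_def by blast
  have "f \<noteq> 0" "f' \<noteq> 0" using rep by (simp_all add: is_transv_rep_def)
  have "d \<in> W"
    using step.IH t transv_displacements_in_subspace_iff[OF assms(1) \<open>f \<noteq> 0\<close>] by simp
  moreover have "transv d' f' ` W \<subseteq> W" using assms(2) t' by blast
  ultimately have "d' \<in> W"
    using edge transv_image_subset_iff[OF assms(1)] by blast
  then show ?case
    using t'(1) transv_displacements_in_subspace_iff[OF assms(1) \<open>f' \<noteq> 0\<close>] by simp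
qed

lemma transv_closed_eq_UNIV:
  assumes rep: "\<forall>\<alpha>\<in>I. is_transv_rep (v \<alpha>) (phi \<alpha>)"
    and closed: "transv_closed I v phi W" and "W \<noteq> {0}"
    and span_v: "vec.span (v ` I) = UNIV" and span_phi: "vec.span (phi ` I) = UNIV"
    and connected: "tgraph_strongly_connected (transvs I v phi)"
  shows "W = UNIV"
proof -
  have W: "vec.subspace W" "\<forall>s\<in>transvs I v phi. s ` W \<subseteq> W"
    using closed by (auto simp: transv_closed_iff_image_subset)
  have displacements_iff: "(\<forall>y. transv (v \<alpha>) (phi \<alpha>) y - y \<in> W) \<longleftrightarrow> v \<alpha> \<in> W"
    if "\<alpha> \<in> I" for \<alpha>
    using rep that transv_displacements_in_subspace_iff[OF W(1)] by (simp add: is_transv_rep_def)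
  obtain x where "x \<in> W" "x \<noteq> 0" using \<open>W \<noteq> {0}\<close> vec.subspace_0[OF W(1)] by blast
  obtain \<alpha> where \<alpha>: "\<alpha> \<in> I" "dual_app (phi \<alpha>) x \<noteq> 0"
  proof (rule ccontr)
    assume "\<not> thesis"
    then have "\<forall>p\<in>phi ` I. dual_app x p = 0" using that by (auto simp: dual_app_commute)
    then have "dual_app x p = 0" for p
      using dual_app_vanishes_on_span span_phi by blast
    moreover obtain y where "dual_app x y \<noteq> 0" using dual_app_nonzero[OF \<open>x \<noteq> 0\<close>] .
    ultimately show False by simp
  qed
  have "v \<alpha> \<in> W" using transv_closedD[OF closed \<alpha>(1) \<open>x \<in> W\<close> \<alpha>(2)] .
  have "v \<beta> \<in> W" if "\<beta> \<in> I" for \<beta>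
  proof -
    have "(transv (v \<alpha>) (phi \<alpha>), transv (v \<beta>) (phi \<beta>)) \<in> (tgraph_edges (transvs I v phi))\<^sup>*"
      using connected transv_in_transvs_minus_id[OF rep \<alpha>(1)] transv_in_transvs_minus_id[OF rep that]
      unfolding tgraph_strongly_connected_def by blast
    moreover have "\<forall>y. transv (v \<alpha>) (phi \<alpha>) y - y \<in> W"
      using displacements_iff[OF \<open>\<alpha> \<in> I\<close>] \<open>v \<alpha> \<in> W\<close> by simp
    ultimately have "\<forall>y. transv (v \<beta>) (phi \<beta>) y - y \<in> W"
      by (rule tgraph_reachable_displacements_in_subspace[OF W])
    then show ?thesis using displacements_iff[OF that] by simp
  qed
  then have "vec.span (v ` I) \<subseteq> W" using W(1) by (intro vec.span_minimal) auto
  then show ?thesis using span_v by blast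
qed

theorem theorem5p2:
  fixes I :: "'i set"
    and v :: "'i \<Rightarrow> 'a::field ^ 'n"
    and phi :: "'i \<Rightarrow> 'a ^ 'n"
  assumes n3: "CARD('n) \<ge> 3"
    and rep: "\<forall>\<alpha>\<in>I. is_transv_rep (v \<alpha>) (phi \<alpha>)"
  shows "irreducible_group (gen_group ((\<lambda>\<alpha>. transv (v \<alpha>) (phi \<alpha>)) ` I))
     \<longleftrightarrow> (vec.span (v ` I) = UNIV \<and> vec.span (phi ` I) = UNIV)
         \<and> tgraph_strongly_connected ((\<lambda>\<alpha>. transv (v \<alpha>) (phi \<alpha>)) ` I)"
proof -
  have "\<forall>\<alpha>\<in>I. dual_app (phi \<alpha>) (v \<alpha>) = 0" using rep by (simp add: is_transv_rep_def)
  then have "irreducible_group (gen_group (transvs I v phi)) \<longleftrightarrow>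
      (\<forall>W. transv_closed I v phi W \<longrightarrow> W = {0} \<or> W = UNIV)"
    by (rule irreducible_gen_group_transvs_iff)
  also have "\<dots> \<longleftrightarrow> (vec.span (v ` I) = UNIV \<and> vec.span (phi ` I) = UNIV)
      \<and> tgraph_strongly_connected (transvs I v phi)"
  proof (intro iffI allI impI)
    assume "\<forall>W. transv_closed I v phi W \<longrightarrow> W = {0} \<or> W = UNIV"
    then have closed_trivial: "\<And>W. transv_closed I v phi W \<Longrightarrow> W = {0} \<or> W = UNIV" by blast
    have "I \<noteq> {}" using index_set_nonempty_if_closed_trivial[OF _ closed_trivial] n3 by simp
    then obtain \<alpha> where \<alpha>: "\<alpha> \<in> I" by blast
    then have "v \<alpha> \<noteq> 0" "phi \<alpha> \<noteq> 0" using rep by (simp_all add: is_transv_rep_def)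
    then show "(vec.span (v ` I) = UNIV \<and> vec.span (phi ` I) = UNIV)
        \<and> tgraph_strongly_connected (transvs I v phi)"
      using span_eq_UNIV_if_closed_trivial[OF \<alpha> _ closed_trivial]
        dual_span_eq_UNIV_if_closed_trivial[OF \<alpha> _ closed_trivial]
        tgraph_strongly_connected_if_closed_trivial[OF rep closed_trivial]
      by blast
  next
    fix W
    assume "(vec.span (v ` I) = UNIV \<and> vec.span (phi ` I) = UNIV)
        \<and> tgraph_strongly_connected (transvs I v phi)" and "transv_closed I v phi W"
    then show "W = {0} \<or> W = UNIV" using transv_closed_eq_UNIV[OF rep] by blast
  qed
  finally show ?thesis .
qed

end
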